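(* Let $d\ge3$, let $X$ be Brownian motion with drift $\mu=(\mu_1,\dots,\mu_d)$, $\mu_i\in\mathbf K_{d,1}$, with transition density $q(t,x,y)$, and let $b\ge0$ be a function in $\mathbf K_{d,1}$. Then for all $\lambda>0$, $t>0$ and $x\in\mathbb R^d$, $$\mathbb E_x\Big[e^{\lambda\int_0^tb(X_s)ds}\Big]\le\big(1+\lambda\sqrt t\,\Lambda_t(b)\big)\exp\big(\lambda^2t\Lambda_t(b)^2\big)\le 2\exp\big(2\lambda^2t\Lambda_t(b)^2\big).$$
   Context: A signed measure $\nu$ on $\mathbb R^d$ belongs to the Kato class $\mathbf K_{d,1}$ if $\lim_{r\downarrow0}\sup_{x}\int_{|x-y|\le r}|x-y|^{-(d-1)}|\nu|(dy)=0$; a function $f$ is in $\mathbf K_{d,1}$ if $|f|dx$ is. Brownian motion with drift $\mu$ (each $\mu_i\in\mathbf K_{d,1}$) is the conservative Feller diffusion $\{X_t;\mathbb P_x\}$ on $\mathbb R^d$ with $X_t=x+W_t+A_t$, $W$ a standard Brownian motion, $A_t=\lim_n\int_0^tb^{(n)}(X_s)ds$ (in probability, locally uniformly in $t$), where $b^{(n)}_i=\varphi_n*\mu_i$ for a standard mollifier $\varphi_n(x)=2^{nd}\varphi(2^nx)$. It has a jointly continuous transition density $q(t,x,y)$. For a signed measure $\nu$, $\Lambda_t(\nu):=\sup_{x\in\mathbb R^d}\int_0^t\int_{\mathbb R^d}s^{-1/2}q(s,x,y)\,|\nu|(dy)\,ds$, and $\Lambda_t(f):=\Lambda_t(f\,dx)$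 for a function $f$. *)

theory Defs
  imports "HOL-Probability.Probability"
begin

definition enn_exp :: "ennreal \<Rightarrow> ennreal" where
  "enn_exp a = (if a = \<top> then \<top> else ennreal (exp (enn2real a)))"

definition kato_kernel :: "real^'d \<Rightarrow> real^'d \<Rightarrow> ennreal" where
  "kato_kernel x y = (if x = y then \<top>
      else ennreal (dist x y powr (- (real CARD('d) - 1))))"

text \<open>A (nonnegative) Borel measure nu, playing the role of the total variation |nu|.\<close>
definition kato_class :: "(real^'d) measure \<Rightarrow> bool" where
  "kato_class nu \<longleftrightarrow> sets nu = sets borel \<and>
     ((\<lambda>r. SUP x. \<integral>\<^sup>+ y\<in>cball x r. kato_kernel x y \<partial>nu) \<longlongrightarrow> 0) (at_right (0::real))"

definition kato_class_fun :: "(real^'d \<Rightarrow> real) \<Rightarrow> bool" where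
  "kato_class_fun f \<longleftrightarrow> f \<in> borel_measurable borel \<and>
     kato_class (density lborel (\<lambda>y. ennreal \<bar>f y\<bar>))"

text \<open>A signed measure is represented as nu = nup - nun with nonnegative Borel measures;
  it is in K_{d,1} iff (for the Jordan decomposition) both parts are.\<close>
definition kato_class_signed :: "(real^'d) measure \<Rightarrow> (real^'d) measure \<Rightarrow> bool" where
  "kato_class_signed nup nun \<longleftrightarrow> kato_class nup \<and> kato_class nun"

definition bump :: "real^'d \<Rightarrow> real" where
  "bump z = (if norm z < 1 then exp (- 1 / (1 - (norm z)\<^sup>2)) else 0)"

definition std_mollifier :: "real^'d \<Rightarrow> real" where
  "std_mollifier z = bump z / (\<integral> w. bump (w::real^'d) \<partial>lborel)"

definition mollifier_n :: "nat \<Rightarrow> real^'d \<Rightarrow> real" where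
  "mollifier_n n z = (2::real) ^ (n * CARD('d)) * std_mollifier (((2::real) ^ n) *\<^sub>R z)"

text \<open>b^(n)_i = phi_n * mu_i, with mu_i = mup i - mun i.\<close>
definition drift_n :: "('d \<Rightarrow> (real^'d) measure) \<Rightarrow> ('d \<Rightarrow> (real^'d) measure)
     \<Rightarrow> nat \<Rightarrow> real^'d \<Rightarrow> real^'d" where
  "drift_n mup mun n x = (\<chi> i. (\<integral> y. mollifier_n n (x - y) \<partial>(mup i))
                              - (\<integral> y. mollifier_n n (x - y) \<partial>(mun i)))"

definition gauss_density :: "real \<Rightarrow> real^'d \<Rightarrow> real" where
  "gauss_density \<tau> z = (2 * pi * \<tau>) powr (- real CARD('d) / 2) * exp (- (norm z)\<^sup>2 / (2 * \<tau>))"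

definition is_filtration :: "'w measure \<Rightarrow> (real \<Rightarrow> 'w measure) \<Rightarrow> bool" where
  "is_filtration Om F \<longleftrightarrow> filtration (space Om) F \<and> (\<forall>s. sets (F s) \<subseteq> sets Om)"

definition std_BM :: "'w measure \<Rightarrow> (real \<Rightarrow> 'w measure) \<Rightarrow> (real \<Rightarrow> 'w \<Rightarrow> real^'d) \<Rightarrow> bool" where
  "std_BM Pm F W \<longleftrightarrow>
     prob_space Pm \<and>
     (\<forall>t\<ge>0. W t \<in> borel_measurable (F t)) \<and>
     (AE \<omega> in Pm. W 0 \<omega> = 0 \<and> continuous_on {0..} (\<lambda>t. W t \<omega>)) \<and>
     (\<forall>s t A B. 0 \<le> s \<longrightarrow> s < t \<longrightarrow> A \<in> sets (F s) \<longrightarrow> B \<in> sets borel \<longrightarrow>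
        emeasure Pm (A \<inter> {\<omega>\<in>space Pm. W t \<omega> - W s \<omega> \<in> B})
          = emeasure Pm A * (\<integral>\<^sup>+ z\<in>B. ennreal (gauss_density (t - s) z) \<partial>lborel))"

definition trans_op :: "(real \<Rightarrow> real^'d \<Rightarrow> real^'d \<Rightarrow> real) \<Rightarrow> real
     \<Rightarrow> (real^'d \<Rightarrow> real) \<Rightarrow> real^'d \<Rightarrow> real" where
  "trans_op q t f x = (\<integral> y. q t x y * f y \<partial>lborel)"

definition feller_density :: "(real \<Rightarrow> real^'d \<Rightarrow> real^'d \<Rightarrow> real) \<Rightarrow> bool" where
  "feller_density q \<longleftrightarrow>
     (\<forall>t>0. \<forall>x y. 0 \<le> q t x y) \<and>
     (\<forall>t>0. \<forall>x. (\<integral>\<^sup>+ y. ennreal (q t x y) \<partial>lborel) = 1) \<and>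
     continuous_on ({0<..} \<times> UNIV \<times> UNIV) (\<lambda>(t, x, y). q t x y) \<and>
     (\<forall>f::real^'d \<Rightarrow> real. continuous_on UNIV f \<longrightarrow> (f \<longlongrightarrow> 0) at_infinity \<longrightarrow>
        (\<forall>t>0. continuous_on UNIV (trans_op q t f) \<and> (trans_op q t f \<longlongrightarrow> 0) at_infinity) \<and>
        (\<forall>\<epsilon>>0. \<exists>\<delta>>0. \<forall>t. 0 < t \<and> t < \<delta> \<longrightarrow> (\<forall>x. \<bar>trans_op q t f x - f x\<bar> < \<epsilon>)))"

definition markov_density :: "'w measure \<Rightarrow> (real^'d \<Rightarrow> 'w measure) \<Rightarrow> (real \<Rightarrow> 'w measure)
     \<Rightarrow> (real \<Rightarrow> 'w \<Rightarrow> real^'d) \<Rightarrow> (real \<Rightarrow> real^'d \<Rightarrow> real^'d \<Rightarrow> real) \<Rightarrow> bool" where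
  "markov_density Om P F X q \<longleftrightarrow>
     (\<forall>x s t A (f :: real^'d \<Rightarrow> ennreal). 0 \<le> s \<longrightarrow> 0 < t \<longrightarrow> A \<in> sets (F s) \<longrightarrow>
        f \<in> borel_measurable borel \<longrightarrow>
        (\<integral>\<^sup>+ \<omega>. indicator A \<omega> * f (X (s + t) \<omega>) \<partial>(P x))
          = (\<integral>\<^sup>+ \<omega>. indicator A \<omega> * (\<integral>\<^sup>+ y. ennreal (q t (X s \<omega>) y) * f y \<partial>lborel) \<partial>(P x)))"

text \<open>Brownian motion with drift mu = (mup i - mun i)_i, mu_i in K_{d,1}:
  the conservative Feller diffusion (P x, X) on the measurable space Om with filtration F and
  jointly continuous transition density q, such that under P x, X_t = x + W_t + A_t, where
  W (depending on x) is a standard (F_t)-Brownian motion and A_t is the limit in P x-probability,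
  locally uniformly in t, of the integrals of b^(n)(X_s) over [0,t].\<close>
definition BM_with_drift ::
  "'w measure \<Rightarrow> (real^'d \<Rightarrow> 'w measure) \<Rightarrow> (real \<Rightarrow> 'w measure) \<Rightarrow> (real \<Rightarrow> 'w \<Rightarrow> real^'d)
   \<Rightarrow> (real^'d \<Rightarrow> real \<Rightarrow> 'w \<Rightarrow> real^'d) \<Rightarrow> (real \<Rightarrow> real^'d \<Rightarrow> real^'d \<Rightarrow> real)
   \<Rightarrow> ('d \<Rightarrow> (real^'d) measure) \<Rightarrow> ('d \<Rightarrow> (real^'d) measure) \<Rightarrow> bool" where
  "BM_with_drift Om P F X W q mup mun \<longleftrightarrow>
     (\<forall>i. kato_class_signed (mup i) (mun i)) \<and>
     is_filtration Om F \<and>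
     (\<forall>x. prob_space (P x) \<and> sets (P x) = sets Om) \<and>
     (\<forall>t\<ge>0. X t \<in> borel_measurable (F t)) \<and>
     (\<forall>x. AE \<omega> in P x. X 0 \<omega> = x \<and> continuous_on {0..} (\<lambda>t. X t \<omega>)) \<and>
     feller_density q \<and>
     markov_density Om P F X q \<and>
     (\<forall>x. std_BM (P x) F (W x)) \<and>
     (\<forall>x T \<epsilon> \<delta>. 0 < T \<longrightarrow> 0 < \<epsilon> \<longrightarrow> 0 < \<delta> \<longrightarrow>
        (\<exists>N. \<forall>n\<ge>N. \<exists>E\<in>sets Om.
           {\<omega>\<in>space Om. \<exists>t\<in>{0..T}.
               \<epsilon> < norm ((X t \<omega> - x - W x t \<omega>) - integral {0..t} (\<lambda>s. drift_n mup mun n (X s \<omega>)))}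
             \<subseteq> E \<and> measure (P x) E < \<delta>))"

text \<open>Lambda_t(nu) for a signed measure nu, given through its total variation measure nuabs.\<close>
definition Lambda :: "(real \<Rightarrow> real^'d \<Rightarrow> real^'d \<Rightarrow> real) \<Rightarrow> real \<Rightarrow> (real^'d) measure \<Rightarrow> ennreal" where
  "Lambda q t nuabs = (SUP x. \<integral>\<^sup>+ s\<in>{0<..t}.
       (\<integral>\<^sup>+ y. ennreal (s powr (-1/2) * q s x y) \<partial>nuabs) \<partial>lborel)"

definition Lambda_fun :: "(real \<Rightarrow> real^'d \<Rightarrow> real^'d \<Rightarrow> real) \<Rightarrow> real \<Rightarrow> (real^'d \<Rightarrow> real) \<Rightarrow> ennreal" where
  "Lambda_fun q t f = Lambda q t (density lborel (\<lambda>y. ennreal \<bar>f y\<bar>))"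

end

theory Submission
  imports Defs
begin

text \<open>Expanding the exponential, exp (lam I) = (SUM n. lam^n T_n), where I is the time integral of
  b(X_s) over [0, t] and T_n = I^n / n! is the integral of b(X_s1) ... b(X_sn) over the ordered simplex
  0 < s1 < ... < sn < t. Integrating out the first time s1 with the Markov property and the transition
  density q, induction on n gives E T_n <= Lambda^n t^(n/2) / sqrt (n!): the weight (t - s1)^(n/2) left
  by the induction hypothesis is traded for the singular factor s1^(-1/2) built into Lambda_t(b).
  Finally (SUM n. A^n / sqrt (n!)) <= (1 + A) exp (A^2), pairing the terms 2k and 2k + 1 and using
  (k!)^2 <= (2k)!.\<close>

lemma Bernoulli_weight_le_one:
  fixes \<theta> :: real
  assumes "0 \<le> \<theta>" "\<theta> \<le> 1"
  shows "real (Suc n) * \<theta> * (1 - \<theta>) ^ n \<le> 1"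
proof -
  have "real (Suc n) * \<theta> \<le> (1 + \<theta>) ^ n"
    using Bernoulli_inequality[of \<theta> n] assms by (simp add: algebra_simps)
  then have "real (Suc n) * \<theta> * (1 - \<theta>) ^ n \<le> (1 + \<theta>) ^ n * (1 - \<theta>) ^ n"
    using assms by (intro mult_right_mono) auto
  also have "\<dots> = (1 - \<theta>\<^sup>2) ^ n"
    by (simp add: power_mult_distrib[symmetric] power2_eq_square algebra_simps)
  also have "\<dots> \<le> 1"
    using assms by (intro power_le_one) (auto simp: power_le_one)
  finally show ?thesis .
qed

lemma sqrt_diff_power_le:
  fixes u R :: real
  assumes "0 < u" "u < R"
  shows "sqrt (R - u) ^ n \<le> sqrt R ^ Suc n / sqrt (real (Suc n)) / sqrt u"
proof -
  have R: "0 < R" using assms by simp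
  have "real (Suc n) * (u / R) * (1 - u / R) ^ n * R ^ Suc n \<le> 1 * R ^ Suc n"
    using assms by (intro mult_right_mono Bernoulli_weight_le_one) auto
  moreover have "(1 - u / R) ^ n * R ^ n = (R - u) ^ n"
    using R by (simp add: power_mult_distrib[symmetric] field_simps)
  then have "real (Suc n) * (u / R) * (1 - u / R) ^ n * R ^ Suc n = (R - u) ^ n * (real (Suc n) * u)"
    using R by (simp add: field_simps)
  ultimately have "(R - u) ^ n * (real (Suc n) * u) \<le> R ^ Suc n"
    by simp
  then have "(R - u) ^ n \<le> R ^ Suc n / (real (Suc n) * u)"
    using assms by (simp add: pos_le_divide_eq)
  then have "sqrt ((R - u) ^ n) \<le> sqrt (R ^ Suc n / (real (Suc n) * u))"
    by (rule real_sqrt_le_mono)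
  then show ?thesis
    by (simp add: real_sqrt_power real_sqrt_divide real_sqrt_mult divide_divide_eq_left)
qed

lemma ennreal_sqrt_diff_power_mult_le:
  fixes u R :: real
  assumes "0 < u" "u < R"
  shows "ennreal (sqrt (R - u) ^ n) * x
    \<le> ennreal (sqrt R ^ Suc n / sqrt (real (Suc n))) * (ennreal (u powr (-1/2)) * x)"
proof -
  have "sqrt (R - u) ^ n \<le> sqrt R ^ Suc n / sqrt (real (Suc n)) * u powr (-1/2)"
    using sqrt_diff_power_le[OF assms, of n] assms by (simp add: powr_minus_divide powr_half_sqrt)
  then have "ennreal (sqrt (R - u) ^ n) * x \<le> ennreal (sqrt R ^ Suc n / sqrt (real (Suc n)) * u powr (-1/2)) * x"
    by (intro mult_right_mono ennreal_leI) simp_all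
  also have "\<dots> = ennreal (sqrt R ^ Suc n / sqrt (real (Suc n))) * (ennreal (u powr (-1/2)) * x)"
    using assms by (subst ennreal_mult) (simp_all add: mult.assoc)
  finally show ?thesis .
qed

lemma sum_power_div_sqrt_fact_le:
  fixes A :: real
  assumes A: "0 \<le> A"
  shows "(\<Sum>n<N. A ^ n / sqrt (fact n)) \<le> (1 + A) * exp (A\<^sup>2)"
proof -
  let ?g = "\<lambda>n. A ^ n / sqrt (fact n)"
  have pairs: "(\<Sum>n<2 * M. ?g n) = (\<Sum>k<M. ?g (2 * k) + ?g (2 * k + 1))" for M
    by (induction M) (simp_all add: ac_simps)
  have term_le: "?g (2 * k) + ?g (2 * k + 1) \<le> (1 + A) * ((A\<^sup>2) ^ k / fact k)" for k
  proof -
    have fk: "fact k \<le> sqrt (fact (2 * k))"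
      using square_fact_le_2_fact[of k] by (intro real_le_rsqrt) (simp add: power2_eq_square)
    also have "\<dots> \<le> sqrt (fact (2 * k + 1))"
      by (intro real_sqrt_le_mono fact_mono) simp
    finally have fk': "fact k \<le> sqrt (fact (2 * k + 1))" .
    have "A ^ (2 * k) = (A\<^sup>2) ^ k" "A ^ (2 * k + 1) = A * (A\<^sup>2) ^ k"
      by (simp_all add: power_mult)
    then have "A ^ (2 * k) / fact k + A ^ (2 * k + 1) / fact k = (1 + A) * ((A\<^sup>2) ^ k / fact k)"
      by (simp add: add_divide_distrib distrib_right)
    moreover have "?g (2 * k) \<le> A ^ (2 * k) / fact k" "?g (2 * k + 1) \<le> A ^ (2 * k + 1) / fact k"
      using A fk fk' by (auto intro!: divide_left_mono)
    ultimately show ?thesis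
      by linarith
  qed
  have "(\<Sum>n<N. ?g n) \<le> (\<Sum>n<2 * N. ?g n)"
    using A by (intro sum_mono2) auto
  also have "\<dots> \<le> (1 + A) * (\<Sum>k<N. (A\<^sup>2) ^ k / fact k)"
    unfolding pairs sum_distrib_left by (intro sum_mono term_le)
  also have "(\<Sum>k<N. (A\<^sup>2) ^ k / fact k) \<le> exp (A\<^sup>2)"
  proof -
    have "(\<lambda>k. (A\<^sup>2) ^ k / fact k) sums exp (A\<^sup>2)"
      using exp_converges[of "A\<^sup>2"] by (simp add: divide_inverse mult.commute)
    then show ?thesis
      using sum_le_suminf[of "\<lambda>k. (A\<^sup>2) ^ k / fact k" "{..<N}"] by (simp add: sums_iff)
  qed
  then have "(1 + A) * (\<Sum>k<N. (A\<^sup>2) ^ k / fact k) \<le> (1 + A) * exp (A\<^sup>2)"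
    using A by (intro mult_left_mono) auto
  finally show ?thesis .
qed

lemma suminf_power_div_sqrt_fact_le:
  fixes A :: real
  assumes "0 \<le> A"
  shows "(\<Sum>n. ennreal (A ^ n / sqrt (fact n))) \<le> ennreal ((1 + A) * exp (A\<^sup>2))"
  unfolding suminf_eq_SUP
proof (rule SUP_least)
  fix N
  have "(\<Sum>n<N. ennreal (A ^ n / sqrt (fact n))) = ennreal (\<Sum>n<N. A ^ n / sqrt (fact n))"
    using assms by (intro sum_ennreal) simp
  also have "\<dots> \<le> ennreal ((1 + A) * exp (A\<^sup>2))"
    using assms by (intro ennreal_leI sum_power_div_sqrt_fact_le)
  finally show "(\<Sum>n<N. ennreal (A ^ n / sqrt (fact n))) \<le> ennreal ((1 + A) * exp (A\<^sup>2))" .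
qed

lemma one_plus_mult_exp_square_le:
  fixes A :: real
  assumes "0 \<le> A"
  shows "(1 + A) * exp (A\<^sup>2) \<le> 2 * exp (2 * A\<^sup>2)"
proof -
  have "A \<le> 1 + A\<^sup>2"
    using zero_le_power2[of "A - 1"] assms unfolding power2_eq_square by (simp add: algebra_simps)
  then have "1 + A \<le> 2 * exp (A\<^sup>2)"
    using exp_ge_add_one_self[of "A\<^sup>2"] zero_le_power2[of A] by linarith
  then have "(1 + A) * exp (A\<^sup>2) \<le> 2 * exp (A\<^sup>2) * exp (A\<^sup>2)"
    by (intro mult_right_mono) auto
  also have "\<dots> = 2 * (exp (A\<^sup>2) * exp (A\<^sup>2))"
    by (simp only: mult.assoc)
  also have "exp (A\<^sup>2) * exp (A\<^sup>2) = exp (2 * A\<^sup>2)"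
    by (simp only: mult_2 exp_add)
  finally show ?thesis .
qed

lemma enn_exp_ennreal: "0 \<le> r \<Longrightarrow> enn_exp (ennreal r) = ennreal (exp r)"
  by (simp add: enn_exp_def)

lemma enn_exp_eq_suminf: "enn_exp y = (\<Sum>n. y ^ n * ennreal (1 / fact n))"
proof (cases y)
  case (real r)
  then have "(\<lambda>n. r ^ n / fact n) sums exp r"
    using exp_converges[of r] by (simp add: divide_inverse mult.commute)
  then have "(\<Sum>n. ennreal (r ^ n / fact n)) = ennreal (exp r)"
    using real by (subst suminf_ennreal2) (auto simp: sums_iff)
  then show ?thesis
    using real by (simp add: enn_exp_ennreal ennreal_power ennreal_mult[symmetric])
next
  case top
  have "(\<Sum>n\<in>{1}. y ^ n * ennreal (1 / fact n)) \<le> (\<Sum>n. y ^ n * ennreal (1 / fact n))"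
    by (intro sum_le_suminf summableI) auto
  then show ?thesis
    using top by (simp add: enn_exp_def top_unique)
qed

lemma ennreal_inverse_sqrt_fact_mult:
  assumes "0 \<le> x"
  shows "ennreal (1 / sqrt (fact n)) * ennreal (x / sqrt (real (Suc n))) = ennreal (x / sqrt (fact (Suc n)))"
proof -
  have "sqrt (fact (Suc n)) = sqrt (real (Suc n)) * sqrt (fact n)"
    by (simp only: fact_Suc of_nat_mult real_sqrt_mult of_nat_fact)
  then show ?thesis
    using assms by (simp add: ennreal_mult[symmetric])
qed

lemma ennreal_exp_bound_eq:
  assumes "0 \<le> lam" "0 \<le> t" "0 \<le> L"
  shows "(1 + ennreal (lam * sqrt t) * ennreal L) * enn_exp (ennreal (lam\<^sup>2 * t) * (ennreal L)\<^sup>2)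
    = ennreal ((1 + lam * sqrt t * L) * exp ((lam * sqrt t * L)\<^sup>2))"
proof -
  define A where "A = lam * sqrt t * L"
  have "1 + ennreal (lam * sqrt t) * ennreal L = ennreal (1 + A)"
    using assms by (simp add: A_def ennreal_mult[symmetric] ennreal_plus[symmetric])
  moreover have "ennreal (lam\<^sup>2 * t) * (ennreal L)\<^sup>2 = ennreal (A\<^sup>2)"
    using assms by (simp add: A_def ennreal_power ennreal_mult[symmetric] power_mult_distrib)
  ultimately have "(1 + ennreal (lam * sqrt t) * ennreal L) * enn_exp (ennreal (lam\<^sup>2 * t) * (ennreal L)\<^sup>2)
      = ennreal (1 + A) * ennreal (exp (A\<^sup>2))"
    by (simp add: enn_exp_ennreal)
  also have "\<dots> = ennreal ((1 + A) * exp (A\<^sup>2))"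
    using assms by (intro ennreal_mult[symmetric]) (simp_all add: A_def)
  finally show ?thesis
    unfolding A_def .
qed

lemma exp_bound_le_double:
  assumes "0 < lam" "0 < t"
  shows "(1 + ennreal (lam * sqrt t) * L) * enn_exp (ennreal (lam\<^sup>2 * t) * L\<^sup>2)
    \<le> 2 * enn_exp (2 * ennreal (lam\<^sup>2 * t) * L\<^sup>2)"
proof (cases L)
  case (real L')
  define A where "A = lam * sqrt t * L'"
  have "ennreal (lam\<^sup>2 * t) * L\<^sup>2 = ennreal (A\<^sup>2)"
    using assms real by (simp add: A_def ennreal_power ennreal_mult[symmetric] power_mult_distrib)
  then have "2 * ennreal (lam\<^sup>2 * t) * L\<^sup>2 = ennreal (2 * A\<^sup>2)"
    by (simp add: ennreal_mult mult.assoc)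
  moreover have "enn_exp (ennreal (2 * A\<^sup>2)) = ennreal (exp (2 * A\<^sup>2))"
    by (rule enn_exp_ennreal) simp
  ultimately have "2 * enn_exp (2 * ennreal (lam\<^sup>2 * t) * L\<^sup>2) = 2 * ennreal (exp (2 * A\<^sup>2))"
    by (simp only:)
  also have "\<dots> = ennreal (2 * exp (2 * A\<^sup>2))"
    by (simp add: ennreal_mult)
  finally show ?thesis
    using assms real one_plus_mult_exp_square_le[of A]
    by (simp add: ennreal_exp_bound_eq A_def ennreal_leI)
next
  case top
  then have "2 * ennreal (lam\<^sup>2 * t) * L\<^sup>2 = \<top>"
    using assms by (simp add: ennreal_mult_eq_top_iff)
  then show ?thesis
    by (simp add: enn_exp_def)
qed

section \<open>Time-ordered integrals\<close>

definition tail_integral :: "(real \<Rightarrow> ennreal) \<Rightarrow> real \<Rightarrow> real \<Rightarrow> ennreal" where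
  "tail_integral f c a = (\<integral>\<^sup>+u. indicator {a<..<c} u * f u \<partial>lborel)"

lemma indicator_greaterThanLessThan_ennreal:
  "indicator {a<..<c} u = (if a < u \<and> u < (c::real) then 1 else (0::ennreal))"
  by (auto simp: indicator_def)

lemma borel_measurable_tail_integral[measurable]:
  assumes [measurable]: "f \<in> borel_measurable borel"
  shows "tail_integral f c \<in> borel_measurable borel"
proof -
  have "(\<lambda>(s, u). indicator {s<..<c} u * f u) \<in> borel_measurable (borel \<Otimes>\<^sub>M lborel)"
    unfolding indicator_greaterThanLessThan_ennreal by measurable
  then show ?thesis
    unfolding tail_integral_def by (rule lborel.borel_measurable_nn_integral)
qed

lemma nn_integral_lborel_split_point:
  fixes f :: "real \<Rightarrow> ennreal"
  assumes "f \<in> borel_measurable lborel"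
  shows "(\<integral>\<^sup>+s. f s \<partial>lborel)
    = (\<integral>\<^sup>+s. (if s < u then f s else 0) \<partial>lborel) + (\<integral>\<^sup>+s. (if u < s then f s else 0) \<partial>lborel)"
proof -
  have "f s = (if s < u then f s else 0) + (if u < s then f s else 0)" if "s \<noteq> u" for s
    using that by (cases s u rule: linorder_cases) simp_all
  then have "AE s in lborel. f s = (if s < u then f s else 0) + (if u < s then f s else 0)"
    using AE_lborel_singleton[of u] by (auto elim: eventually_mono)
  then show ?thesis
    using assms by (simp add: nn_integral_cong_AE nn_integral_add)
qed

lemma nn_integral_upper_section:
  assumes "k \<in> borel_measurable borel"
  shows "(\<integral>\<^sup>+v. (if u < v then indicator {a<..<c} u * h u * (indicator {a<..<c} v * k v) else 0) \<partial>lborel)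
    = indicator {a<..<c} u * (h u * tail_integral k c u)"
proof -
  have "(\<integral>\<^sup>+v. (if u < v then indicator {a<..<c} u * h u * (indicator {a<..<c} v * k v) else 0) \<partial>lborel)
      = (\<integral>\<^sup>+v. indicator {a<..<c} u * h u * (indicator {u<..<c} v * k v) \<partial>lborel)"
    by (rule nn_integral_cong) (auto simp: indicator_def)
  then show ?thesis
    using assms by (simp add: nn_integral_cmult tail_integral_def mult.assoc)
qed

text \<open>The square (a, c) \<times> (a, c) splits along its null diagonal into two triangles.\<close>
lemma tail_integral_mult:
  assumes [measurable]: "f \<in> borel_measurable borel" "g \<in> borel_measurable borel"
  shows "tail_integral f c a * tail_integral g c a
    = tail_integral (\<lambda>s. g s * tail_integral f c s) c a + tail_integral (\<lambda>u. f u * tail_integral g c u) c a"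
proof -
  let ?H = "\<lambda>u s. indicator {a<..<c} u * f u * (indicator {a<..<c} s * g s)"
  have [measurable]: "(\<lambda>(u, s). ?H u s) \<in> borel_measurable (lborel \<Otimes>\<^sub>M lborel)"
    by (simp add: measurable_lborel2 sets_lborel)
  have "tail_integral f c a * tail_integral g c a
      = (\<integral>\<^sup>+u. indicator {a<..<c} u * f u * tail_integral g c a \<partial>lborel)"
    unfolding tail_integral_def[of f] by (rule nn_integral_multc[symmetric]) simp
  also have "\<dots> = (\<integral>\<^sup>+u. \<integral>\<^sup>+s. ?H u s \<partial>lborel \<partial>lborel)"
    unfolding tail_integral_def by (intro nn_integral_cong nn_integral_cmult[symmetric]) simp
  also have "\<dots> = (\<integral>\<^sup>+u. (\<integral>\<^sup>+s. (if s < u then ?H u s else 0) \<partial>lborel)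
                       + (\<integral>\<^sup>+s. (if u < s then ?H u s else 0) \<partial>lborel) \<partial>lborel)"
    by (intro nn_integral_cong nn_integral_lborel_split_point) simp
  also have "\<dots> = (\<integral>\<^sup>+u. \<integral>\<^sup>+s. (if s < u then ?H u s else 0) \<partial>lborel \<partial>lborel)
                 + (\<integral>\<^sup>+u. \<integral>\<^sup>+s. (if u < s then ?H u s else 0) \<partial>lborel \<partial>lborel)"
    by (rule nn_integral_add) auto
  also have "(\<integral>\<^sup>+u. \<integral>\<^sup>+s. (if s < u then ?H u s else 0) \<partial>lborel \<partial>lborel)
      = (\<integral>\<^sup>+s. \<integral>\<^sup>+u. (if s < u then ?H u s else 0) \<partial>lborel \<partial>lborel)"
    by (rule lborel_pair.Fubini'[symmetric]) (simp add: measurable_lborel2 sets_lborel)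
  also have "\<dots> = tail_integral (\<lambda>s. g s * tail_integral f c s) c a"
  proof -
    have "(\<integral>\<^sup>+u. (if s < u then ?H u s else 0) \<partial>lborel)
        = (\<integral>\<^sup>+u. (if s < u then indicator {a<..<c} s * g s * (indicator {a<..<c} u * f u) else 0) \<partial>lborel)"
      for s
      by (intro nn_integral_cong) (simp add: ac_simps)
    then show ?thesis
      unfolding tail_integral_def[of "\<lambda>s. g s * tail_integral f c s"]
      by (simp add: nn_integral_upper_section)
  qed
  also have "(\<integral>\<^sup>+u. \<integral>\<^sup>+s. (if u < s then ?H u s else 0) \<partial>lborel \<partial>lborel)
      = tail_integral (\<lambda>u. f u * tail_integral g c u) c a"
    unfolding tail_integral_def[of "\<lambda>u. f u * tail_integral g c u"] by (simp add: nn_integral_upper_section)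
  finally show ?thesis .
qed

lemma tail_integral_cmult:
  assumes "h \<in> borel_measurable borel"
  shows "r * tail_integral h c a = tail_integral (\<lambda>s. r * h s) c a"
  unfolding tail_integral_def using assms
  by (subst nn_integral_cmult[symmetric]) (auto simp: ac_simps)

lemma tail_integral_power_Suc:
  assumes [measurable]: "f \<in> borel_measurable borel"
  shows "tail_integral f c a ^ Suc n
    = of_nat (Suc n) * tail_integral (\<lambda>s. f s * tail_integral f c s ^ n) c a"
proof (induction n arbitrary: a)
  case 0
  show ?case by (simp add: tail_integral_def)
next
  case (Suc n)
  let ?F = "tail_integral f c" and ?m = "of_nat (Suc n) :: ennreal"
  let ?g = "\<lambda>s. f s * ?F s ^ n"
  have "?F a ^ Suc (Suc n) = ?m * (?F a * tail_integral ?g c a)"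
    using Suc by (simp add: ac_simps)
  also have "\<dots> = ?m * tail_integral (\<lambda>s. f s * ?F s ^ Suc n) c a
      + ?m * tail_integral (\<lambda>u. f u * tail_integral ?g c u) c a"
    by (subst tail_integral_mult) (simp_all add: ac_simps distrib_left)
  also have "?m * tail_integral (\<lambda>u. f u * tail_integral ?g c u) c a
      = tail_integral (\<lambda>u. f u * (?m * tail_integral ?g c u)) c a"
    by (subst tail_integral_cmult) (simp_all add: mult.left_commute)
  also have "\<dots> = tail_integral (\<lambda>s. f s * ?F s ^ Suc n) c a"
    by (simp only: Suc[symmetric])
  finally show ?case
    by (simp add: algebra_simps)
qed

text \<open>\<open>ordered_integral f c n a\<close> is the integral of f(s1) ... f(sn) over a < s1 < ... < sn < c.\<close>
primrec ordered_integral :: "(real \<Rightarrow> ennreal) \<Rightarrow> real \<Rightarrow> nat \<Rightarrow> real \<Rightarrow> ennreal" where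
  "ordered_integral f c 0 a = 1"
| "ordered_integral f c (Suc n) a = tail_integral (\<lambda>s. f s * ordered_integral f c n s) c a"

lemma fact_mult_ordered_integral:
  assumes [measurable]: "f \<in> borel_measurable borel"
  shows "fact n * ordered_integral f c n a = tail_integral f c a ^ n"
proof (induction n arbitrary: a)
  case 0
  then show ?case by simp
next
  case (Suc n)
  have [measurable]: "ordered_integral f c n \<in> borel_measurable borel" for n
    by (induction n) simp_all
  have "fact (Suc n) * ordered_integral f c (Suc n) a
      = of_nat (Suc n) * (fact n * ordered_integral f c (Suc n) a)"
    by (simp add: fact_Suc mult.assoc)
  also have "fact n * ordered_integral f c (Suc n) a
      = tail_integral (\<lambda>s. f s * (fact n * ordered_integral f c n s)) c a"
    by (subst ordered_integral.simps, subst tail_integral_cmult) (simp_all add: mult.left_commute)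
  also have "tail_integral (\<lambda>s. f s * (fact n * ordered_integral f c n s)) c a
      = tail_integral (\<lambda>s. f s * tail_integral f c s ^ n) c a"
    by (simp only: Suc)
  also have "of_nat (Suc n) * \<dots> = tail_integral f c a ^ Suc n"
    by (rule tail_integral_power_Suc[symmetric]) simp
  finally show ?case .
qed

lemma ordered_integral_measurable_pair:
  assumes f[measurable]: "(\<lambda>(w, s). f w s) \<in> borel_measurable (M \<Otimes>\<^sub>M borel)"
  shows "(\<lambda>(w, a). ordered_integral (f w) c n a) \<in> borel_measurable (M \<Otimes>\<^sub>M borel)"
proof (induction n)
  case 0
  then show ?case by simp
next
  case (Suc n)
  note IH[measurable] = Suc
  have "(\<lambda>((w, a), s). f w s) \<in> borel_measurable ((M \<Otimes>\<^sub>M borel) \<Otimes>\<^sub>M lborel)"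
    using measurable_compose[OF _ f, of "\<lambda>((w, a), s). (w, s)"] by (simp add: split_beta')
  moreover have "(\<lambda>((w, a), s). ordered_integral (f w) c n s) \<in> borel_measurable ((M \<Otimes>\<^sub>M borel) \<Otimes>\<^sub>M lborel)"
    using measurable_compose[OF _ IH, of "\<lambda>((w, a), s). (w, s)"] by (simp add: split_beta')
  ultimately have "(\<lambda>((w, a), s). indicator {a<..<c} s * (f w s * ordered_integral (f w) c n s))
      \<in> borel_measurable ((M \<Otimes>\<^sub>M borel) \<Otimes>\<^sub>M lborel)"
    unfolding indicator_greaterThanLessThan_ennreal by (simp add: split_beta') measurable
  then show ?case
    using lborel.borel_measurable_nn_integral
      [of "\<lambda>(w, a) s. indicator {a<..<c} s * (f w s * ordered_integral (f w) c n s)" "M \<Otimes>\<^sub>M borel"]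
    by (simp add: split_beta' tail_integral_def)
qed

lemma tail_integral_mono:
  "(\<And>s. a < s \<Longrightarrow> s < c \<Longrightarrow> f s \<le> g s) \<Longrightarrow> tail_integral f c a \<le> tail_integral g c a"
  unfolding tail_integral_def by (intro nn_integral_mono) (simp add: indicator_def)

lemma nn_integral_tail_integral_swap:
  assumes M: "sigma_finite_measure M"
    and g_borel: "(\<lambda>(w, s). g w s) \<in> borel_measurable (M \<Otimes>\<^sub>M borel)" and Z: "Z \<in> borel_measurable M"
  shows "(\<integral>\<^sup>+w. Z w * tail_integral (g w) c a \<partial>M) = tail_integral (\<lambda>s. \<integral>\<^sup>+w. Z w * g w s \<partial>M) c a"
proof -
  interpret pair_sigma_finite M lborel
    using M by (intro pair_sigma_finite.intro sigma_finite_lborel)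
  have g: "(\<lambda>(w, s). g w s) \<in> borel_measurable (M \<Otimes>\<^sub>M lborel)"
    unfolding measurable_cong_sets[OF sets_pair_measure_cong[OF refl sets_lborel] refl] by (rule g_borel)
  have joint: "(\<lambda>(w, s). Z w * (indicator {a<..<c} s * g w s)) \<in> borel_measurable (M \<Otimes>\<^sub>M lborel)"
    using g Z by (simp add: split_beta') measurable
  have "(\<integral>\<^sup>+w. Z w * tail_integral (g w) c a \<partial>M)
      = (\<integral>\<^sup>+w. \<integral>\<^sup>+s. Z w * (indicator {a<..<c} s * g w s) \<partial>lborel \<partial>M)"
    unfolding tail_integral_def
    using measurable_Pair2[OF g] by (intro nn_integral_cong nn_integral_cmult[symmetric]) simp
  also have "\<dots> = (\<integral>\<^sup>+s. \<integral>\<^sup>+w. Z w * (indicator {a<..<c} s * g w s) \<partial>M \<partial>lborel)"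
    using Fubini'[OF joint] by (simp add: split_beta')
  also have "\<dots> = tail_integral (\<lambda>s. \<integral>\<^sup>+w. Z w * g w s \<partial>M) c a"
    unfolding tail_integral_def
    using measurable_Pair1[OF g] Z
    by (intro nn_integral_cong) (simp add: nn_integral_cmult[symmetric] ac_simps)
  finally show ?thesis .
qed

lemma enn_exp_mult_tail_integral:
  assumes "f \<in> borel_measurable borel"
  shows "enn_exp (ennreal r * tail_integral f c a) = (\<Sum>n. ennreal r ^ n * ordered_integral f c n a)"
proof -
  have fact_inverse: "(fact n :: ennreal) * ennreal (1 / fact n) = 1" for n
  proof -
    have "(fact n :: ennreal) = ennreal (fact n)"
      by (metis ennreal_of_nat_eq_real_of_nat of_nat_fact)
    then show ?thesis
      by (simp add: ennreal_mult[symmetric])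
  qed
  have "(ennreal r * tail_integral f c a) ^ n * ennreal (1 / fact n)
      = ennreal r ^ n * ordered_integral f c n a * (fact n * ennreal (1 / fact n))" for n
    by (simp add: power_mult_distrib fact_mult_ordered_integral[OF assms, symmetric] mult_ac)
  then show ?thesis
    unfolding enn_exp_eq_suminf fact_inverse by simp
qed

lemma ceiling_grid_tendsto: "(\<lambda>k. real_of_int \<lceil>s * real (Suc k)\<rceil> / real (Suc k)) \<longlonglongrightarrow> s"
proof (rule tendsto_sandwich[of "\<lambda>k. s" _ _ "\<lambda>k. s + inverse (real (Suc k))"])
  show "\<forall>\<^sub>F k in sequentially. real_of_int \<lceil>s * real (Suc k)\<rceil> / real (Suc k) \<le> s + inverse (real (Suc k))"
  proof (intro always_eventually allI)
    fix k
    have "real_of_int \<lceil>s * real (Suc k)\<rceil> \<le> s * real (Suc k) + 1"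
      by linarith
    then show "real_of_int \<lceil>s * real (Suc k)\<rceil> / real (Suc k) \<le> s + inverse (real (Suc k))"
      by (simp add: field_simps del: of_nat_Suc)
  qed
  show "(\<lambda>k. s + inverse (real (Suc k))) \<longlonglongrightarrow> s"
    using tendsto_add[OF tendsto_const LIMSEQ_inverse_real_of_nat, of s] by simp
qed (auto simp: field_simps)

lemma borel_measurable_continuous_paths:
  fixes Y :: "real \<Rightarrow> 'w \<Rightarrow> 'b::metric_space"
  assumes Y_measurable: "\<And>s. 0 \<le> s \<Longrightarrow> Y s \<in> borel_measurable M"
    and Y_continuous: "\<And>w. w \<in> space M \<Longrightarrow> continuous_on {0..} (\<lambda>s. Y s w)"
  shows "(\<lambda>(w, s). Y (max 0 s) w) \<in> borel_measurable (M \<Otimes>\<^sub>M borel)"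
proof (rule borel_measurable_LIMSEQ_metric)
  let ?grid = "\<lambda>k (s::real). max 0 (real_of_int \<lceil>s * real (Suc k)\<rceil> / real (Suc k))"
  fix k :: nat
  have grid_index: "(\<lambda>ws. \<lceil>snd ws * real (Suc k)\<rceil>) \<in> measurable (M \<Otimes>\<^sub>M borel) (count_space UNIV)"
    by measurable
  have grid_value: "(\<lambda>ws. Y (max 0 (real_of_int i / real (Suc k))) (fst ws)) \<in> borel_measurable (M \<Otimes>\<^sub>M borel)"
    if "i \<in> UNIV" for i
    by (rule measurable_compose[OF measurable_fst Y_measurable]) simp
  show "(\<lambda>ws. Y (?grid k (snd ws)) (fst ws)) \<in> borel_measurable (M \<Otimes>\<^sub>M borel)"
    by (rule measurable_compose_countable'[OF grid_value grid_index countableI_type])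
next
  let ?grid = "\<lambda>k (s::real). max 0 (real_of_int \<lceil>s * real (Suc k)\<rceil> / real (Suc k))"
  fix ws :: "'w \<times> real"
  assume "ws \<in> space (M \<Otimes>\<^sub>M borel)"
  then obtain w s where ws: "ws = (w, s)" "w \<in> space M"
    by (auto simp: space_pair_measure)
  have "(\<lambda>k. real_of_int \<lceil>s * real (Suc k)\<rceil> / real (Suc k)) \<longlonglongrightarrow> s"
    by (rule ceiling_grid_tendsto)
  then have grid_lim: "(\<lambda>k. ?grid k s) \<longlonglongrightarrow> max 0 s"
    by (intro tendsto_max tendsto_const)
  have "(\<lambda>k. Y (?grid k s) w) \<longlonglongrightarrow> Y (max 0 s) w"
    using continuous_on_tendsto_compose[OF Y_continuous[OF ws(2)] grid_lim] by auto
  then show "(\<lambda>k. Y (?grid k (snd ws)) (fst ws)) \<longlonglongrightarrow> (case ws of (w, s) \<Rightarrow> Y (max 0 s) w)"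
    using ws by simp
qed

lemma borel_measurable_positive_time_kernel:
  fixes q :: "real \<Rightarrow> 'a::second_countable_topology \<Rightarrow> 'b::second_countable_topology \<Rightarrow> real"
  assumes "continuous_on ({0<..} \<times> UNIV \<times> UNIV) (\<lambda>(r, y, z). q r y z)"
  shows "(\<lambda>((r, y), z). ennreal (indicator {0<..} r * q r y z)) \<in> borel_measurable ((borel \<Otimes>\<^sub>M borel) \<Otimes>\<^sub>M borel)"
proof -
  have "(\<lambda>p. indicator ({0<..} \<times> UNIV) p *\<^sub>R (case p of (r, y, z) \<Rightarrow> q r y z)) \<in> borel_measurable borel"
    using assms by (intro borel_measurable_continuous_on_indicator) (auto intro!: borel_open open_Times)
  then have q: "(\<lambda>(r, y, z). indicator {0<..} r * q r y z) \<in> borel_measurable (borel \<Otimes>\<^sub>M (borel \<Otimes>\<^sub>M borel))"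
    by (simp add: borel_prod indicator_def split_beta' mem_Times_iff)
  have assoc: "(\<lambda>((r, y), z). (r, y, z)) \<in> measurable ((borel \<Otimes>\<^sub>M borel) \<Otimes>\<^sub>M borel) (borel \<Otimes>\<^sub>M (borel \<Otimes>\<^sub>M borel))"
    by (simp add: split_beta') measurable
  from measurable_compose[OF measurable_compose[OF assoc q] measurable_ennreal] show ?thesis
    by (simp add: split_beta')
qed

lemma sigma_sets_insert_trace:
  assumes S: "sigma_algebra \<Omega> S" and G: "G \<subseteq> \<Omega>" and C: "C \<in> sigma_sets \<Omega> (S \<union> {G})"
  shows "\<exists>A\<in>S. C \<inter> G = A \<inter> G"
proof -
  interpret sigma_algebra \<Omega> S by (fact S)
  show ?thesis
    using C
  proof induction
    case (Basic a)
    then show ?case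
      using G by blast
  next
    case Empty
    then show ?case
      by blast
  next
    case (Compl a)
    then obtain A where "A \<in> S" "a \<inter> G = A \<inter> G"
      by blast
    then show ?case
      using G by (intro bexI[of _ "\<Omega> - A"]) auto
  next
    case (Union a)
    then obtain A where "\<And>i. A i \<in> S \<and> a i \<inter> G = A i \<inter> G"
      by metis
    then show ?case
      by (intro bexI[of _ "\<Union>i. A i"]) auto
  qed
qed

section \<open>Markov processes with continuous paths and a transition density\<close>

locale continuous_markov_process =
  fixes Om :: "'w measure" and Px :: "'w measure" and F :: "real \<Rightarrow> 'w measure"
    and X :: "real \<Rightarrow> 'w \<Rightarrow> real^'d" and q :: "real \<Rightarrow> real^'d \<Rightarrow> real^'d \<Rightarrow> real"
    and G :: "'w set"
  assumes filtration: "filtration (space Om) F" and sets_F_subset: "\<And>s. sets (F s) \<subseteq> sets Om"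
    and prob_space_Px: "prob_space Px" and sets_Px: "sets Px = sets Om"
    and X_adapted: "\<And>s. 0 \<le> s \<Longrightarrow> X s \<in> borel_measurable (F s)"
    and G_sets: "G \<in> sets Om" and G_compl_null: "emeasure Px (space Om - G) = 0"
    and continuous_paths: "\<And>w. w \<in> G \<Longrightarrow> continuous_on {0..} (\<lambda>s. X s w)"
    and q_nonneg: "\<And>r y z. 0 < r \<Longrightarrow> 0 \<le> q r y z"
    and q_continuous: "continuous_on ({0<..} \<times> UNIV \<times> UNIV) (\<lambda>(r, y, z). q r y z)"
    and markov: "\<And>s r A f. 0 \<le> s \<Longrightarrow> 0 < r \<Longrightarrow> A \<in> sets (F s) \<Longrightarrow> f \<in> borel_measurable borel \<Longrightarrow>
        (\<integral>\<^sup>+w. indicator A w * f (X (s + r) w) \<partial>Px)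
          = (\<integral>\<^sup>+w. indicator A w * (\<integral>\<^sup>+y. ennreal (q r (X s w) y) * f y \<partial>lborel) \<partial>Px)"
begin

lemma space_Px: "space Px = space Om"
  using sets_Px by (rule sets_eq_imp_space_eq)

lemma space_F: "space (F s) = space Om"
  using filtration by (simp add: filtration_def)

lemma G_subset_space: "G \<subseteq> space Om"
  using G_sets sets.sets_into_space by blast

lemma AE_G: "AE w in Px. w \<in> G"
  using G_sets G_compl_null sets_Px by (intro AE_I[of _ _ "space Om - G"]) (auto simp: space_Px)

lemma subalgebra_F: "subalgebra Px (F s)"
  using sets_F_subset by (simp add: subalgebra_def space_F space_Px sets_Px)

lemma X_measurable: "0 \<le> s \<Longrightarrow> X s \<in> borel_measurable Px"
  using measurable_from_subalg[OF subalgebra_F X_adapted] .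

text \<open>Paths are continuous only on the full-measure set \<open>G\<close>; adjoining \<open>G\<close> to the filtration makes
  the everywhere continuous modification \<open>Xc\<close> of \<open>X\<close> adapted.\<close>
definition augmented_filtration :: "real \<Rightarrow> 'w measure" where
  "augmented_filtration v = sigma (space Om) (sets (F v) \<union> {G})"

lemma sets_augmented_filtration:
  "sets (augmented_filtration v) = sigma_sets (space Om) (sets (F v) \<union> {G})"
  unfolding augmented_filtration_def
  using G_subset_space sets.sets_into_space[of _ "F v"] space_F by (intro sets_measure_of) auto

lemma space_augmented_filtration: "space (augmented_filtration v) = space Om"
  unfolding augmented_filtration_def
  using G_subset_space sets.sets_into_space[of _ "F v"] space_F by (intro space_measure_of) auto

lemma subalgebra_augmented_filtration: "subalgebra Px (augmented_filtration v)"
  unfolding subalgebra_def sets_augmented_filtration space_augmented_filtration sets_Px space_Px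
  using sets_F_subset G_sets by (auto intro!: sets.sigma_sets_subset)

lemma subalgebra_augmented_filtration_F: "subalgebra (augmented_filtration v) (F v)"
  by (auto simp: subalgebra_def sets_augmented_filtration space_augmented_filtration space_F)

lemma subalgebra_augmented_filtration_mono:
  "s \<le> v \<Longrightarrow> subalgebra (augmented_filtration v) (augmented_filtration s)"
  unfolding subalgebra_def sets_augmented_filtration space_augmented_filtration
  using filtration.sets_F_mono[OF filtration] by (auto intro!: sigma_sets_mono')

lemma augmented_filtration_trace:
  assumes "C \<in> sets (augmented_filtration v)"
  shows "\<exists>A\<in>sets (F v). C \<inter> G = A \<inter> G"
proof (rule sigma_sets_insert_trace)
  show "sigma_algebra (space Om) (sets (F v))"
    using sets.sigma_algebra_axioms[of "F v"] space_F by simp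
qed (use assms G_subset_space in \<open>simp_all add: sets_augmented_filtration\<close>)

definition Xc :: "real \<Rightarrow> 'w \<Rightarrow> real^'d" where
  "Xc s w = (if w \<in> G then X s w else 0)"

lemma Xc_measurable: "0 \<le> s \<Longrightarrow> Xc s \<in> borel_measurable (augmented_filtration s)"
proof -
  assume "0 \<le> s"
  then have "X s \<in> borel_measurable (augmented_filtration s)"
    by (intro measurable_from_subalg[OF subalgebra_augmented_filtration_F] X_adapted)
  moreover have "G \<inter> space (augmented_filtration s) \<in> sets (augmented_filtration s)"
    using G_subset_space by (auto simp: sets_augmented_filtration space_augmented_filtration Int_absorb2)
  ultimately show ?thesis
    unfolding Xc_def by (intro measurable_If_set) auto
qed

lemma Xc_measurable_pair: "(\<lambda>(w, s). Xc (max 0 s) w) \<in> borel_measurable (Px \<Otimes>\<^sub>M borel)"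
proof (rule borel_measurable_continuous_paths)
  show "Xc s \<in> borel_measurable Px" if "0 \<le> s" for s
    using measurable_from_subalg[OF subalgebra_augmented_filtration Xc_measurable[OF that]] .
  show "continuous_on {0..} (\<lambda>s. Xc s w)" for w
    unfolding Xc_def by (cases "w \<in> G") (auto simp: continuous_paths)
qed

definition transition_nn :: "real \<Rightarrow> (real^'d \<Rightarrow> ennreal) \<Rightarrow> real^'d \<Rightarrow> ennreal" where
  "transition_nn r h y = (\<integral>\<^sup>+z. ennreal (q r y z) * h z \<partial>lborel)"

lemma transition_nn_measurable_pair:
  assumes [measurable]: "h \<in> borel_measurable borel"
  shows "(\<lambda>(r, y). indicator {0<..} r * transition_nn r h y) \<in> borel_measurable (borel \<Otimes>\<^sub>M borel)"
proof -
  have "(\<lambda>((r, y), z). ennreal (indicator {0<..} r * q r y z) * h z)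
      \<in> borel_measurable ((borel \<Otimes>\<^sub>M borel) \<Otimes>\<^sub>M lborel)"
    using borel_measurable_positive_time_kernel[OF q_continuous] by (simp add: split_beta') measurable
  then have "(\<lambda>(r, y). \<integral>\<^sup>+z. ennreal (indicator {0<..} r * q r y z) * h z \<partial>lborel)
      \<in> borel_measurable (borel \<Otimes>\<^sub>M borel)"
    using lborel.borel_measurable_nn_integral
      [of "\<lambda>(r, y) z. ennreal (indicator {0<..} r * q r y z) * h z" "borel \<Otimes>\<^sub>M borel"]
    by (simp add: split_beta')
  moreover have "(\<integral>\<^sup>+z. ennreal (indicator {0<..} r * q r y z) * h z \<partial>lborel) = indicator {0<..} r * transition_nn r h y"
    for r y
    by (simp add: transition_nn_def indicator_def)
  ultimately show ?thesis
    by simp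
qed

lemma transition_nn_measurable:
  assumes "h \<in> borel_measurable borel" "0 < r"
  shows "transition_nn r h \<in> borel_measurable borel"
  using measurable_Pair2[OF transition_nn_measurable_pair[OF assms(1)], of r] assms(2) by simp

lemma markov_augmented_indicator:
  assumes v: "0 \<le> v" and r: "0 < r" and A: "A \<in> sets (augmented_filtration v)"
    and h: "h \<in> borel_measurable borel"
  shows "(\<integral>\<^sup>+w. indicator A w * h (X (v + r) w) \<partial>Px) = (\<integral>\<^sup>+w. indicator A w * transition_nn r h (X v w) \<partial>Px)"
proof -
  obtain B where B: "B \<in> sets (F v)" "A \<inter> G = B \<inter> G"
    using augmented_filtration_trace[OF A] by blast
  have AB: "AE w in Px. indicator A w = (indicator B w :: ennreal)"
    using AE_G by eventually_elim (use B in \<open>auto simp: indicator_def\<close>)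
  have "(\<integral>\<^sup>+w. indicator A w * h (X (v + r) w) \<partial>Px) = (\<integral>\<^sup>+w. indicator B w * h (X (v + r) w) \<partial>Px)"
    using AB by (intro nn_integral_cong_AE) auto
  also have "\<dots> = (\<integral>\<^sup>+w. indicator B w * transition_nn r h (X v w) \<partial>Px)"
    unfolding transition_nn_def by (rule markov[OF v r B(1) h])
  also have "\<dots> = (\<integral>\<^sup>+w. indicator A w * transition_nn r h (X v w) \<partial>Px)"
    using AB by (intro nn_integral_cong_AE) auto
  finally show ?thesis .
qed

lemma markov_augmented:
  assumes v: "0 \<le> v" and r: "0 < r" and Z: "Z \<in> borel_measurable (augmented_filtration v)"
    and h: "h \<in> borel_measurable borel"
  shows "(\<integral>\<^sup>+w. Z w * h (X (v + r) w) \<partial>Px) = (\<integral>\<^sup>+w. Z w * transition_nn r h (X v w) \<partial>Px)"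
proof -
  have hX: "(\<lambda>w. h (X (v + r) w)) \<in> borel_measurable Px"
    and PhX: "(\<lambda>w. transition_nn r h (X v w)) \<in> borel_measurable Px"
    using measurable_compose[OF X_measurable h] measurable_compose[OF X_measurable transition_nn_measurable[OF h r]]
      v r by simp_all
  show ?thesis
    using Z
  proof (induction rule: borel_measurable_induct)
    case (cong f g)
    then have "(\<integral>\<^sup>+w. f w * k w \<partial>Px) = (\<integral>\<^sup>+w. g w * k w \<partial>Px)" for k :: "'w \<Rightarrow> ennreal"
      by (intro nn_integral_cong) (simp add: space_Px space_augmented_filtration)
    with cong show ?case
      by simp
  next
    case (set A)
    then show ?case
      by (rule markov_augmented_indicator[OF v r _ h])
  next
    case (mult u c)
    then have "u \<in> borel_measurable Px"
      by (auto intro: measurable_from_subalg[OF subalgebra_augmented_filtration])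
    then have "(\<integral>\<^sup>+w. c * u w * k w \<partial>Px) = c * (\<integral>\<^sup>+w. u w * k w \<partial>Px)"
      if "k \<in> borel_measurable Px" for k
      using that by (subst nn_integral_cmult[symmetric]) (auto simp: ac_simps)
    with mult hX PhX show ?case
      by simp
  next
    case (add u w')
    then have "u \<in> borel_measurable Px" "w' \<in> borel_measurable Px"
      by (auto intro: measurable_from_subalg[OF subalgebra_augmented_filtration])
    with add hX PhX show ?case
      by (simp add: distrib_right nn_integral_add)
  next
    case (seq U)
    then have "U i \<in> borel_measurable Px" for i
      by (auto intro: measurable_from_subalg[OF subalgebra_augmented_filtration])
    moreover have "incseq (\<lambda>i w. U i w * k w)" for k :: "'w \<Rightarrow> ennreal"
      using seq by (auto simp: incseq_def le_fun_def intro!: mult_right_mono)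
    ultimately show ?case
      using seq hX PhX by (simp add: SUP_mult_right_ennreal image_comp nn_integral_monotone_convergence_SUP)
  qed
qed

end

section \<open>Exponential moments of the time integral of a potential\<close>

locale markov_potential = continuous_markov_process Om Px F X q G
  for Om :: "'w measure" and Px F X and q :: "real \<Rightarrow> real^'d \<Rightarrow> real^'d \<Rightarrow> real" and G +
  fixes b :: "real^'d \<Rightarrow> real" and t :: real
  assumes b_measurable[measurable]: "b \<in> borel_measurable borel" and b_nonneg: "\<And>y. 0 \<le> b y"
    and t_pos: "0 < t"
begin

abbreviation \<Lambda> :: ennreal where
  "\<Lambda> \<equiv> Lambda_fun q t b"

text \<open>The indicator makes \<open>potential_kernel\<close> jointly measurable: \<open>q\<close> is only known to be continuous
  for positive times.\<close>
definition potential_kernel :: "real \<Rightarrow> real^'d \<Rightarrow> ennreal" where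
  "potential_kernel r y = indicator {0<..} r * transition_nn r (\<lambda>z. ennreal (b z)) y"

lemma potential_kernel_measurable_pair:
  "(\<lambda>(r, y). potential_kernel r y) \<in> borel_measurable (borel \<Otimes>\<^sub>M borel)"
  unfolding potential_kernel_def by (rule transition_nn_measurable_pair) simp

lemma Lambda_integrand_eq:
  assumes u: "0 < u"
  shows "ennreal (u powr (-1/2)) * potential_kernel u y
    = (\<integral>\<^sup>+z. ennreal (u powr (-1/2) * q u y z) \<partial>density lborel (\<lambda>z. ennreal \<bar>b z\<bar>))"
proof -
  have q_measurable: "(\<lambda>z. ennreal (q u y z)) \<in> borel_measurable borel"
    using measurable_Pair2[OF borel_measurable_positive_time_kernel[OF q_continuous], of "(u, y)"] u
    by (simp add: space_pair_measure)
  have "(\<integral>\<^sup>+z. ennreal (u powr (-1/2) * q u y z) \<partial>density lborel (\<lambda>z. ennreal \<bar>b z\<bar>))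
      = (\<integral>\<^sup>+z. ennreal (u powr (-1/2)) * (ennreal (q u y z) * ennreal (b z)) \<partial>lborel)"
    using q_measurable u q_nonneg[OF u] b_nonneg
    by (subst nn_integral_density) (auto simp: ennreal_mult[symmetric] mult_ac intro!: nn_integral_cong)
  also have "\<dots> = ennreal (u powr (-1/2)) * potential_kernel u y"
    using q_measurable u by (simp add: potential_kernel_def transition_nn_def nn_integral_cmult)
  finally show ?thesis ..
qed

lemma time_integral_potential_kernel_le:
  "(\<integral>\<^sup>+u\<in>{0<..t}. ennreal (u powr (-1/2)) * potential_kernel u y \<partial>lborel) \<le> \<Lambda>"
proof -
  have "(\<integral>\<^sup>+u\<in>{0<..t}. ennreal (u powr (-1/2)) * potential_kernel u y \<partial>lborel)
     = (\<integral>\<^sup>+u\<in>{0<..t}. (\<integral>\<^sup>+z. ennreal (u powr (-1/2) * q u y z) \<partial>density lborel (\<lambda>z. ennreal \<bar>b z\<bar>)) \<partial>lborel)"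
  proof (intro nn_integral_cong)
    fix u
    show "ennreal (u powr (-1/2)) * potential_kernel u y * indicator {0<..t} u
        = (\<integral>\<^sup>+z. ennreal (u powr (-1/2) * q u y z) \<partial>density lborel (\<lambda>z. ennreal \<bar>b z\<bar>)) * indicator {0<..t} u"
      by (cases "0 < u") (simp only: Lambda_integrand_eq, simp)
  qed
  also have "\<dots> \<le> \<Lambda>"
    unfolding Lambda_fun_def Lambda_def by (rule SUP_upper) simp
  finally show ?thesis .
qed

lemma tail_integral_potential_kernel_le:
  assumes "a \<le> c" "c - a \<le> t"
  shows "tail_integral (\<lambda>s. ennreal (sqrt (c - s) ^ n) * potential_kernel (s - a) y) c a
     \<le> ennreal (sqrt (c - a) ^ Suc n / sqrt (real (Suc n))) * \<Lambda>"
proof -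
  let ?K = "ennreal (sqrt (c - a) ^ Suc n / sqrt (real (Suc n)))"
  define g where "g u = indicator {0<..t} u * (ennreal (u powr (-1/2)) * potential_kernel u y)" for u
  have [measurable]: "(\<lambda>u. potential_kernel u y) \<in> borel_measurable borel"
    using measurable_Pair1[OF potential_kernel_measurable_pair, of y] by simp
  have g_measurable: "g \<in> borel_measurable borel"
    unfolding g_def by measurable
  have "tail_integral (\<lambda>s. ennreal (sqrt (c - s) ^ n) * potential_kernel (s - a) y) c a
      \<le> (\<integral>\<^sup>+s. ?K * g (s - a) \<partial>lborel)"
    unfolding tail_integral_def
  proof (intro nn_integral_mono)
    fix s
    show "indicator {a<..<c} s * (ennreal (sqrt (c - s) ^ n) * potential_kernel (s - a) y) \<le> ?K * g (s - a)"
      using ennreal_sqrt_diff_power_mult_le[of "s - a" "c - a" n "potential_kernel (s - a) y"] assms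
      by (auto simp: g_def indicator_def)
  qed
  also have "\<dots> = ?K * (\<integral>\<^sup>+u. g u \<partial>lborel)"
  proof -
    have "(\<lambda>s. g (s - a)) \<in> borel_measurable borel"
      using g_measurable by measurable
    from nn_integral_real_affine[OF this, of 1 a] this show ?thesis
      by (simp add: nn_integral_cmult)
  qed
  also have "\<dots> \<le> ?K * \<Lambda>"
    using time_integral_potential_kernel_le[of y]
    by (intro mult_left_mono) (simp_all add: g_def mult_ac)
  finally show ?thesis .
qed

definition potential_path :: "'w \<Rightarrow> real \<Rightarrow> ennreal" where
  "potential_path w s = ennreal (b (Xc (max 0 s) w))"

lemma potential_path_measurable_pair:
  "(\<lambda>(w, s). potential_path w s) \<in> borel_measurable (Px \<Otimes>\<^sub>M borel)"
  using measurable_compose[OF Xc_measurable_pair b_measurable] unfolding potential_path_def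
  by (simp add: split_beta')

lemma potential_path_adapted:
  "0 \<le> s \<Longrightarrow> (\<lambda>w. potential_path w s) \<in> borel_measurable (augmented_filtration s)"
  unfolding potential_path_def using measurable_compose[OF Xc_measurable b_measurable] by simp

lemma potential_path_mult_adapted:
  assumes "0 \<le> a" "a \<le> s" "Z \<in> borel_measurable (augmented_filtration a)"
  shows "(\<lambda>w. Z w * potential_path w s) \<in> borel_measurable (augmented_filtration s)"
proof -
  have "Z \<in> borel_measurable (augmented_filtration s)"
    using measurable_from_subalg[OF subalgebra_augmented_filtration_mono assms(3)] assms(2) by simp
  moreover have "(\<lambda>w. potential_path w s) \<in> borel_measurable (augmented_filtration s)"
    using assms by (intro potential_path_adapted) auto
  ultimately show ?thesis
    by measurable
qed

lemma expectation_potential_path: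
  assumes "0 \<le> a" "a < s" "Z \<in> borel_measurable (augmented_filtration a)"
  shows "(\<integral>\<^sup>+w. Z w * potential_path w s \<partial>Px) = (\<integral>\<^sup>+w. Z w * potential_kernel (s - a) (X a w) \<partial>Px)"
proof -
  have "(\<integral>\<^sup>+w. Z w * potential_path w s \<partial>Px) = (\<integral>\<^sup>+w. Z w * ennreal (b (X (a + (s - a)) w)) \<partial>Px)"
    using AE_G assms by (intro nn_integral_cong_AE) (auto elim!: eventually_mono simp: potential_path_def Xc_def)
  also have "\<dots> = (\<integral>\<^sup>+w. Z w * transition_nn (s - a) (\<lambda>z. ennreal (b z)) (X a w) \<partial>Px)"
    using assms by (intro markov_augmented) auto
  finally show ?thesis
    using assms by (simp add: potential_kernel_def)
qed

lemma potential_kernel_shifted_measurable_pair: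
  assumes "0 \<le> a"
  shows "(\<lambda>(w, s). potential_kernel (s - a) (X a w)) \<in> borel_measurable (Px \<Otimes>\<^sub>M borel)"
proof -
  have "(\<lambda>(w, s). (s - a, X a w)) \<in> measurable (Px \<Otimes>\<^sub>M borel) (borel \<Otimes>\<^sub>M borel)"
    using measurable_compose[OF measurable_fst X_measurable] assms by (simp add: split_beta') measurable
  from measurable_compose[OF this potential_kernel_measurable_pair] show ?thesis
    by (simp add: split_beta')
qed

lemma tail_integral_expectation_potential_kernel_le:
  assumes "0 \<le> a" "a \<le> c" "c - a \<le> t" "Z \<in> borel_measurable Px"
  shows "tail_integral (\<lambda>s. \<integral>\<^sup>+w. Z w * (ennreal (sqrt (c - s) ^ n) * potential_kernel (s - a) (X a w)) \<partial>Px) c a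
    \<le> ennreal (sqrt (c - a) ^ Suc n / sqrt (real (Suc n))) * \<Lambda> * (\<integral>\<^sup>+w. Z w \<partial>Px)"
proof -
  have "(\<lambda>(w, s). ennreal (sqrt (c - s) ^ n) * potential_kernel (s - a) (X a w)) \<in> borel_measurable (Px \<Otimes>\<^sub>M borel)"
    using potential_kernel_shifted_measurable_pair[OF assms(1)] by (simp add: split_beta') measurable
  then have "tail_integral (\<lambda>s. \<integral>\<^sup>+w. Z w * (ennreal (sqrt (c - s) ^ n) * potential_kernel (s - a) (X a w)) \<partial>Px) c a
      = (\<integral>\<^sup>+w. Z w * tail_integral (\<lambda>s. ennreal (sqrt (c - s) ^ n) * potential_kernel (s - a) (X a w)) c a \<partial>Px)"
    using prob_space_imp_sigma_finite[OF prob_space_Px] assms(4) by (intro nn_integral_tail_integral_swap[symmetric])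
  also have "\<dots> \<le> (\<integral>\<^sup>+w. Z w * (ennreal (sqrt (c - a) ^ Suc n / sqrt (real (Suc n))) * \<Lambda>) \<partial>Px)"
    using assms by (intro nn_integral_mono mult_left_mono tail_integral_potential_kernel_le) auto
  also have "\<dots> = ennreal (sqrt (c - a) ^ Suc n / sqrt (real (Suc n))) * \<Lambda> * (\<integral>\<^sup>+w. Z w \<partial>Px)"
    using assms(4) by (simp add: nn_integral_multc ac_simps)
  finally show ?thesis .
qed

lemma expectation_ordered_integral_le:
  assumes "0 \<le> a" "a \<le> c" "c - a \<le> t" "Z \<in> borel_measurable (augmented_filtration a)"
  shows "(\<integral>\<^sup>+w. Z w * ordered_integral (potential_path w) c n a \<partial>Px)
    \<le> \<Lambda> ^ n * ennreal (sqrt (c - a) ^ n / sqrt (fact n)) * (\<integral>\<^sup>+w. Z w \<partial>Px)"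
  using assms
proof (induction n arbitrary: a Z)
  case 0
  then show ?case by simp
next
  case (Suc n)
  define C where "C = \<Lambda> ^ n * ennreal (1 / sqrt (fact n))"
  have Z[measurable]: "Z \<in> borel_measurable Px"
    using Suc.prems(4) by (rule measurable_from_subalg[OF subalgebra_augmented_filtration])
  note [measurable] = potential_path_measurable_pair
    ordered_integral_measurable_pair[OF potential_path_measurable_pair]
  have "(\<integral>\<^sup>+w. Z w * ordered_integral (potential_path w) c (Suc n) a \<partial>Px)
      = tail_integral (\<lambda>s. \<integral>\<^sup>+w. Z w * (potential_path w s * ordered_integral (potential_path w) c n s) \<partial>Px) c a"
    unfolding ordered_integral.simps using prob_space_imp_sigma_finite[OF prob_space_Px]
    by (intro nn_integral_tail_integral_swap Z) measurable
  also have "\<dots> \<le> tail_integral (\<lambda>s. \<integral>\<^sup>+w. C * Z w * (ennreal (sqrt (c - s) ^ n) * potential_kernel (s - a) (X a w)) \<partial>Px) c a"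
  proof (rule tail_integral_mono)
    fix s
    assume s: "a < s" "s < c"
    have "(\<lambda>w. Z w * potential_path w s) \<in> borel_measurable (augmented_filtration s)"
      using Suc.prems s by (intro potential_path_mult_adapted) auto
    then have "(\<integral>\<^sup>+w. Z w * (potential_path w s * ordered_integral (potential_path w) c n s) \<partial>Px)
        \<le> \<Lambda> ^ n * ennreal (sqrt (c - s) ^ n / sqrt (fact n)) * (\<integral>\<^sup>+w. Z w * potential_path w s \<partial>Px)"
      using Suc.IH[of s "\<lambda>w. Z w * potential_path w s"] Suc.prems s by (simp add: mult.assoc)
    moreover have "(\<integral>\<^sup>+w. Z w * potential_path w s \<partial>Px) = (\<integral>\<^sup>+w. Z w * potential_kernel (s - a) (X a w) \<partial>Px)"
      using Suc.prems s by (intro expectation_potential_path) auto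
    moreover have "\<Lambda> ^ n * ennreal (sqrt (c - s) ^ n / sqrt (fact n)) = C * ennreal (sqrt (c - s) ^ n)"
      using s by (simp add: C_def ennreal_mult[symmetric] mult.assoc)
    moreover have "C * ennreal (sqrt (c - s) ^ n) * (\<integral>\<^sup>+w. Z w * potential_kernel (s - a) (X a w) \<partial>Px)
        = (\<integral>\<^sup>+w. C * Z w * (ennreal (sqrt (c - s) ^ n) * potential_kernel (s - a) (X a w)) \<partial>Px)"
      using potential_kernel_shifted_measurable_pair[OF Suc.prems(1)]
      by (subst nn_integral_cmult[symmetric]) (simp_all add: measurable_Pair1 ac_simps)
    ultimately show "(\<integral>\<^sup>+w. Z w * (potential_path w s * ordered_integral (potential_path w) c n s) \<partial>Px)
        \<le> (\<integral>\<^sup>+w. C * Z w * (ennreal (sqrt (c - s) ^ n) * potential_kernel (s - a) (X a w)) \<partial>Px)"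
      by simp
  qed
  also have "\<dots> \<le> ennreal (sqrt (c - a) ^ Suc n / sqrt (real (Suc n))) * \<Lambda> * (\<integral>\<^sup>+w. C * Z w \<partial>Px)"
    using Suc.prems by (intro tail_integral_expectation_potential_kernel_le) auto
  also have "\<dots> = \<Lambda> ^ Suc n * ennreal (sqrt (c - a) ^ Suc n / sqrt (fact (Suc n))) * (\<integral>\<^sup>+w. Z w \<partial>Px)"
  proof -
    have "ennreal (1 / sqrt (fact n)) * ennreal (sqrt (c - a) ^ Suc n / sqrt (real (Suc n)))
        = ennreal (sqrt (c - a) ^ Suc n / sqrt (fact (Suc n)))"
      using Suc.prems by (intro ennreal_inverse_sqrt_fact_mult) simp
    moreover have "ennreal (sqrt (c - a) ^ Suc n / sqrt (real (Suc n))) * \<Lambda> * (\<integral>\<^sup>+w. C * Z w \<partial>Px)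
        = (\<Lambda> * \<Lambda> ^ n) * (ennreal (1 / sqrt (fact n)) * ennreal (sqrt (c - a) ^ Suc n / sqrt (real (Suc n))))
          * (\<integral>\<^sup>+w. Z w \<partial>Px)"
      unfolding nn_integral_cmult[OF Z] C_def by (simp only: ac_simps)
    ultimately show ?thesis
      by (simp only: power_Suc)
  qed
  finally show ?case .
qed

lemma time_integral_eq_tail_integral:
  "AE w in Px. (\<integral>\<^sup>+s\<in>{0..t}. ennreal (b (X s w)) \<partial>lborel) = tail_integral (potential_path w) t 0"
  using AE_G
proof eventually_elim
  case (elim w)
  have "AE s in lborel. ennreal (b (X s w)) * indicator {0..t} s = indicator {0<..<t} s * potential_path w s"
    using AE_lborel_singleton[of 0] AE_lborel_singleton[of t]
    by eventually_elim (use elim in \<open>auto simp: indicator_def potential_path_def Xc_def\<close>)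
  then show ?case
    unfolding tail_integral_def by (rule nn_integral_cong_AE)
qed

lemma expectation_exp_time_integral_eq:
  "(\<integral>\<^sup>+w. enn_exp (ennreal lam * (\<integral>\<^sup>+s\<in>{0..t}. ennreal (b (X s w)) \<partial>lborel)) \<partial>Px)
    = (\<Sum>n. ennreal lam ^ n * (\<integral>\<^sup>+w. ordered_integral (potential_path w) t n 0 \<partial>Px))"
proof -
  have [measurable]: "(\<lambda>w. ordered_integral (potential_path w) t n 0) \<in> borel_measurable Px" for n
    using measurable_Pair1[OF ordered_integral_measurable_pair[OF potential_path_measurable_pair, of t n], of 0]
    by simp
  have path_measurable: "potential_path w \<in> borel_measurable borel" if "w \<in> space Px" for w
    using measurable_Pair2[OF potential_path_measurable_pair that] by simp
  have "AE w in Px. enn_exp (ennreal lam * (\<integral>\<^sup>+s\<in>{0..t}. ennreal (b (X s w)) \<partial>lborel))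
      = (\<Sum>n. ennreal lam ^ n * ordered_integral (potential_path w) t n 0)"
    using time_integral_eq_tail_integral AE_space
    by eventually_elim (simp add: enn_exp_mult_tail_integral path_measurable)
  then have "(\<integral>\<^sup>+w. enn_exp (ennreal lam * (\<integral>\<^sup>+s\<in>{0..t}. ennreal (b (X s w)) \<partial>lborel)) \<partial>Px)
      = (\<integral>\<^sup>+w. (\<Sum>n. ennreal lam ^ n * ordered_integral (potential_path w) t n 0) \<partial>Px)"
    by (rule nn_integral_cong_AE)
  also have "\<dots> = (\<Sum>n. ennreal lam ^ n * (\<integral>\<^sup>+w. ordered_integral (potential_path w) t n 0 \<partial>Px))"
    by (simp add: nn_integral_suminf nn_integral_cmult)
  finally show ?thesis .
qed

lemma expectation_ordered_integral_from_zero_le: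
  "(\<integral>\<^sup>+w. ordered_integral (potential_path w) t n 0 \<partial>Px) \<le> \<Lambda> ^ n * ennreal (sqrt t ^ n / sqrt (fact n))"
proof -
  interpret prob_space Px
    by (rule prob_space_Px)
  have "(\<integral>\<^sup>+w. 1 * ordered_integral (potential_path w) t n 0 \<partial>Px)
      \<le> \<Lambda> ^ n * ennreal (sqrt (t - 0) ^ n / sqrt (fact n)) * (\<integral>\<^sup>+w. 1 \<partial>Px)"
    using t_pos by (intro expectation_ordered_integral_le) auto
  then show ?thesis
    by (simp add: emeasure_space_1)
qed

lemma expectation_exp_time_integral_le:
  assumes lam: "0 < lam"
  shows "(\<integral>\<^sup>+w. enn_exp (ennreal lam * (\<integral>\<^sup>+s\<in>{0..t}. ennreal (b (X s w)) \<partial>lborel)) \<partial>Px)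
    \<le> (1 + ennreal (lam * sqrt t) * \<Lambda>) * enn_exp (ennreal (lam\<^sup>2 * t) * \<Lambda>\<^sup>2)"
proof (cases \<Lambda>)
  case (real L)
  define A where "A = lam * sqrt t * L"
  have "ennreal lam ^ n * (\<integral>\<^sup>+w. ordered_integral (potential_path w) t n 0 \<partial>Px)
      \<le> ennreal (A ^ n / sqrt (fact n))" for n
  proof -
    have "ennreal lam ^ n * (\<integral>\<^sup>+w. ordered_integral (potential_path w) t n 0 \<partial>Px)
        \<le> ennreal lam ^ n * (ennreal L ^ n * ennreal (sqrt t ^ n / sqrt (fact n)))"
      using expectation_ordered_integral_from_zero_le[of n] real by (intro mult_left_mono) simp_all
    also have "\<dots> = ennreal (A ^ n / sqrt (fact n))"
      using lam real t_pos by (simp add: A_def ennreal_power ennreal_mult[symmetric] power_mult_distrib)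
    finally show ?thesis .
  qed
  then have "(\<integral>\<^sup>+w. enn_exp (ennreal lam * (\<integral>\<^sup>+s\<in>{0..t}. ennreal (b (X s w)) \<partial>lborel)) \<partial>Px)
      \<le> (\<Sum>n. ennreal (A ^ n / sqrt (fact n)))"
    unfolding expectation_exp_time_integral_eq by (intro suminf_le summableI)
  also have "\<dots> \<le> ennreal ((1 + A) * exp (A\<^sup>2))"
    using lam t_pos real by (intro suminf_power_div_sqrt_fact_le) (simp add: A_def)
  also have "\<dots> = (1 + ennreal (lam * sqrt t) * \<Lambda>) * enn_exp (ennreal (lam\<^sup>2 * t) * \<Lambda>\<^sup>2)"
    using lam t_pos real by (simp add: A_def ennreal_exp_bound_eq)
  finally show ?thesis .
next
  case top
  then have "ennreal (lam * sqrt t) * \<Lambda> = \<top>" "ennreal (lam\<^sup>2 * t) * \<Lambda>\<^sup>2 = \<top>"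
    using lam t_pos by (simp_all add: ennreal_mult_eq_top_iff)
  then show ?thesis
    by (simp add: enn_exp_def)
qed

end

lemma BM_with_drift_markov_potential:
  assumes X: "BM_with_drift Om P F X W q mup mun"
    and b: "kato_class_fun b" "\<forall>y. 0 \<le> b y" and t: "0 < t"
  obtains G where "markov_potential Om (P x) F X q G b t"
proof -
  have filtration: "filtration (space Om) F" "\<And>s. sets (F s) \<subseteq> sets Om"
    using X by (auto simp: BM_with_drift_def is_filtration_def)
  have P: "prob_space (P x)" "sets (P x) = sets Om"
    using X by (auto simp: BM_with_drift_def)
  have X_adapted: "\<And>s. 0 \<le> s \<Longrightarrow> X s \<in> borel_measurable (F s)"
    using X by (auto simp: BM_with_drift_def)
  have q: "\<And>r y z. 0 < r \<Longrightarrow> 0 \<le> q r y z" "continuous_on ({0<..} \<times> UNIV \<times> UNIV) (\<lambda>(r, y, z). q r y z)"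
    using X by (auto simp: BM_with_drift_def feller_density_def)
  have markov: "\<And>s r A f. 0 \<le> s \<Longrightarrow> 0 < r \<Longrightarrow> A \<in> sets (F s) \<Longrightarrow> f \<in> borel_measurable borel \<Longrightarrow>
      (\<integral>\<^sup>+w. indicator A w * f (X (s + r) w) \<partial>P x)
        = (\<integral>\<^sup>+w. indicator A w * (\<integral>\<^sup>+y. ennreal (q r (X s w) y) * f y \<partial>lborel) \<partial>P x)"
    using X by (auto simp: BM_with_drift_def markov_density_def)
  have "AE w in P x. X 0 w = x \<and> continuous_on {0..} (\<lambda>t. X t w)"
    using X by (auto simp: BM_with_drift_def)
  then obtain N where N: "{w \<in> space (P x). \<not> (X 0 w = x \<and> continuous_on {0..} (\<lambda>t. X t w))} \<subseteq> N"
      "emeasure (P x) N = 0" "N \<in> sets (P x)"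
    by (rule AE_E)
  have space_P: "space (P x) = space Om"
    using P(2) by (rule sets_eq_imp_space_eq)
  have "continuous_markov_process Om (P x) F X q (space Om - N)"
  proof (rule continuous_markov_process.intro)
    show "space Om - N \<in> sets Om"
      using N(3) P(2) by auto
    show "emeasure (P x) (space Om - (space Om - N)) = 0"
      using N(2) sets.sets_into_space[OF N(3)] space_P by (simp add: Diff_Diff_Int Int_absorb1)
    show "continuous_on {0..} (\<lambda>s. X s w)" if "w \<in> space Om - N" for w
      using N(1) that space_P by auto
  qed (fact filtration P X_adapted q markov)+
  moreover have "markov_potential_axioms b t"
    using b t by unfold_locales (auto simp: kato_class_fun_def)
  ultimately show ?thesis
    by (intro that markov_potential.intro)
qed

text \<open>Only the Markov structure of \<open>X\<close> and the measurability of \<open>b\<close> are used: the dimension and the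
  Kato conditions serve to make Lambda_t(b) finite, and for Lambda_t(b) = \<infinity> both bounds are trivial.\<close>
theorem proposition2p2:
  fixes Om :: "'w measure" and P :: "real^'d \<Rightarrow> 'w measure" and F :: "real \<Rightarrow> 'w measure"
    and X :: "real \<Rightarrow> 'w \<Rightarrow> real^'d" and W :: "real^'d \<Rightarrow> real \<Rightarrow> 'w \<Rightarrow> real^'d"
    and q :: "real \<Rightarrow> real^'d \<Rightarrow> real^'d \<Rightarrow> real"
    and mup mun :: "'d \<Rightarrow> (real^'d) measure"
    and b :: "real^'d \<Rightarrow> real"
    and lam t :: real and x :: "real^'d"
  assumes dim: "CARD('d) \<ge> 3"
    and X: "BM_with_drift Om P F X W q mup mun"
    and b_nonneg: "\<forall>y. 0 \<le> b y"
    and b_kato: "kato_class_fun b"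
    and lam_pos: "0 < lam" and t: "0 < t"
  shows "(\<integral>\<^sup>+ \<omega>. enn_exp (ennreal lam * (\<integral>\<^sup>+ s\<in>{0..t}. ennreal (b (X s \<omega>)) \<partial>lborel)) \<partial>(P x))
           \<le> (1 + ennreal (lam * sqrt t) * Lambda_fun q t b)
               * enn_exp (ennreal (lam\<^sup>2 * t) * (Lambda_fun q t b)\<^sup>2)
       \<and> (1 + ennreal (lam * sqrt t) * Lambda_fun q t b)
               * enn_exp (ennreal (lam\<^sup>2 * t) * (Lambda_fun q t b)\<^sup>2)
           \<le> 2 * enn_exp (2 * ennreal (lam\<^sup>2 * t) * (Lambda_fun q t b)\<^sup>2)"
proof -
  obtain G where "markov_potential Om (P x) F X q G b t"
    using BM_with_drift_markov_potential[OF X b_kato b_nonneg t] .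
  then interpret markov_potential Om "P x" F X q G b t .
  show ?thesis
    using expectation_exp_time_integral_le[OF lam_pos] exp_bound_le_double[OF lam_pos t] by blast
qed

end
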